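(* Let $G=(V,E,w)$ be a connected weighted graph with $n$ vertices, and let $k\in\mathbb{R}$. Then $$ \sum_{\{s,t\}\subseteq V}\big(H^{(2k-1)}_{st}\big)^{2}=n\cdot\sum_{e\in E}w_e\cdot\big(H^{(2k)}_{e}\big)^{2}, $$ where the left sum is over unordered pairs of distinct vertices.
   Context: $G=(V,E,w)$ is undirected with positive edge weights $w_e$ and graph Laplacian $L=D-A$ (weighted degree matrix minus weighted adjacency matrix), with spectral decomposition $L=\sum_i\lambda_ix_ix_i^{T}$. For $k\in\mathbb{R}$, $(L^{+})^{k}:=\sum_{i:\lambda_i>0}\lambda_i^{-k}x_ix_i^{T}$. With $1_v$ the indicator vector of vertex $v$, the $k$-harmonic distance is $H^{(k)}_{st}=\sqrt{(1_s-1_t)^{T}(L^{+})^{k}(1_s-1_t)}$, and $H^{(k)}_e:=H^{(k)}_{st}$ for an edge $e=\{s,t\}$. *)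

theory Defs
  imports "HOL-Analysis.Analysis"
begin

text \<open>Vertices are the elements of a finite type 'n (so n = CARD('n)).
  A weighted graph is given by a symmetric weight function w with w s t > 0 iff {s,t} is an edge,
  w s t = 0 otherwise, and no loops.\<close>

definition weighted_graph :: "('n::finite \<Rightarrow> 'n \<Rightarrow> real) \<Rightarrow> bool" where
  "weighted_graph w \<longleftrightarrow> (\<forall>s t. w s t = w t s) \<and> (\<forall>s t. w s t \<ge> 0) \<and> (\<forall>s. w s s = 0)"

definition edges :: "('n::finite \<Rightarrow> 'n \<Rightarrow> real) \<Rightarrow> 'n set set" where
  "edges w = {{s, t} | s t. s \<noteq> t \<and> w s t > 0}"

definition connected_graph :: "('n::finite \<Rightarrow> 'n \<Rightarrow> real) \<Rightarrow> bool" where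
  "connected_graph w \<longleftrightarrow> (\<forall>s t. (s, t) \<in> {(u, v). w u v > 0}\<^sup>*)"

definition laplacian :: "('n::finite \<Rightarrow> 'n \<Rightarrow> real) \<Rightarrow> real^'n^'n" where
  "laplacian w = (\<chi> i j. (if i = j then (\<Sum>l\<in>UNIV. w i l) else 0) - w i j)"

definition outer :: "real^'n \<Rightarrow> real^'n \<Rightarrow> real^'n^'n" where
  "outer u v = (\<chi> i j. u $ i * v $ j)"

text \<open>(L^+)^k built from a spectral decomposition L = sum_i lam_i x_i x_i^T.\<close>
definition pinv_pow :: "('n::finite \<Rightarrow> real) \<Rightarrow> ('n \<Rightarrow> real^'n) \<Rightarrow> real \<Rightarrow> real^'n^'n" where
  "pinv_pow lam x k = (\<Sum>i\<in>{i. lam i > 0}. (lam i powr (-k)) *\<^sub>R outer (x i) (x i))"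

definition ind :: "'n::finite \<Rightarrow> real^'n" where
  "ind v = axis v 1"

definition harm_dist :: "('n::finite \<Rightarrow> real) \<Rightarrow> ('n \<Rightarrow> real^'n) \<Rightarrow> real \<Rightarrow> 'n \<Rightarrow> 'n \<Rightarrow> real" where
  "harm_dist lam x k s t =
     sqrt ((ind s - ind t) \<bullet> (pinv_pow lam x k *v (ind s - ind t)))"

definition on_pair :: "('n \<Rightarrow> 'n \<Rightarrow> 'b) \<Rightarrow> 'n set \<Rightarrow> 'b" where
  "on_pair f e = (let s = (SOME s. s \<in> e) in f s (SOME t. t \<in> e \<and> t \<noteq> s))"

end

theory Submission
  imports Defs
begin

text \<open>Expanding in the orthonormal eigenbasis,
  (H^(k)_st)^2 = sum over \<lambda>_i > 0 of \<lambda>_i^(-k) (x_i(s) - x_i(t))^2.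
  An eigenvector with \<lambda>_i > 0 is a unit vector orthogonal to the all-ones vector, so summing
  (x_i(s) - x_i(t))^2 over all ordered pairs (s, t) gives 2n, while summing it against the weights
  w_st gives 2 x_i^T L x_i = 2 \<lambda>_i. Hence both sides equal n times the sum of \<lambda>_i^(1 - 2k)
  over the positive eigenvalues.\<close>

lemma outer_mult_vec: "outer u v *v y = (v \<bullet> y) *\<^sub>R u"
  by (simp add: vec_eq_iff outer_def matrix_vector_mult_def inner_vec_def sum_distrib_left mult_ac)

lemma sum_matrix_vector_mult:
  "(\<Sum>i\<in>S. (A i :: 'a::comm_semiring_1^'n^'m)) *v y = (\<Sum>i\<in>S. A i *v y)"
  by (induction S rule: infinite_finite_induct) (auto simp: matrix_vector_mult_add_rdistrib)

lemma pinv_pow_quadratic_form: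
  "v \<bullet> (pinv_pow lam x k *v v) = (\<Sum>i\<in>{i. lam i > 0}. lam i powr (-k) * (x i \<bullet> v)\<^sup>2)"
  unfolding pinv_pow_def sum_matrix_vector_mult scaleR_matrix_vector_assoc[symmetric] outer_mult_vec
  by (simp add: inner_sum_right power2_eq_square inner_commute mult.assoc)

lemma inner_ind_diff: "u \<bullet> (ind s - ind t) = u $ s - u $ t"
  by (simp add: ind_def inner_diff_right inner_axis)

lemma harm_dist_eq:
  "harm_dist lam x k s t = sqrt (\<Sum>i\<in>{i. lam i > 0}. lam i powr (-k) * (x i $ s - x i $ t)\<^sup>2)"
  unfolding harm_dist_def pinv_pow_quadratic_form inner_ind_diff ..

lemma harm_dist_power2:
  "(harm_dist lam x k s t)\<^sup>2 = (\<Sum>i\<in>{i. lam i > 0}. lam i powr (-k) * (x i $ s - x i $ t)\<^sup>2)"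
  unfolding harm_dist_eq by (simp add: sum_nonneg)

lemma harm_dist_commute: "harm_dist lam x k s t = harm_dist lam x k t s"
  unfolding harm_dist_eq by (simp add: power2_commute)

lemma harm_dist_self: "harm_dist lam x k s s = 0"
  unfolding harm_dist_eq by simp

lemma on_pair_doubleton:
  assumes "s \<noteq> t" and "\<And>a b. F a b = F b a"
  shows "on_pair F {s, t} = F s t"
proof -
  define a where "a = (SOME a. a \<in> {s, t})"
  have a: "a \<in> {s, t}" unfolding a_def by (rule someI_ex) auto
  define b where "b = (SOME b. b \<in> {s, t} \<and> b \<noteq> a)"
  have b: "b \<in> {s, t} \<and> b \<noteq> a" unfolding b_def by (rule someI_ex) (use a assms in auto)
  have "on_pair F {s, t} = F a b" unfolding on_pair_def a_def b_def Let_def by simp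
  also have "\<dots> = F s t" using a b assms by auto
  finally show ?thesis .
qed

lemma on_pair_mult: "on_pair (\<lambda>s t. F s t * G s t) p = on_pair F p * on_pair G p"
  by (simp add: on_pair_def Let_def)

lemma on_pair_power2: "(on_pair F p)\<^sup>2 = on_pair (\<lambda>s t. (F s t)\<^sup>2) p"
  by (simp add: on_pair_def Let_def)

lemma finite_doubletons: "finite {{s, t} | s t. (s::'a::finite) \<noteq> t}"
  by (rule finite_subset[of _ "Pow UNIV"]) auto

lemma sum_doubletons:
  fixes F :: "'a::finite \<Rightarrow> 'a \<Rightarrow> 'b::field_char_0"
  assumes "\<And>a b. F a b = F b a" and "\<And>a. F a a = 0"
  shows "(\<Sum>p\<in>{{s, t} | s t. s \<noteq> t}. on_pair F p) = (\<Sum>s\<in>UNIV. \<Sum>t\<in>UNIV. F s t) / 2"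
proof -
  let ?D = "{(s, t). (s::'a) \<noteq> t}"
  have "(\<Sum>s\<in>UNIV. \<Sum>t\<in>UNIV. F s t) = (\<Sum>(s, t)\<in>?D. F s t)"
    unfolding sum.cartesian_product by (rule sum.mono_neutral_right) (auto simp: assms(2))
  also have "\<dots> = (\<Sum>p\<in>{{s, t} | s t. s \<noteq> t}. \<Sum>q\<in>{q\<in>?D. (\<lambda>(s, t). {s, t}) q = p}. case_prod F q)"
    by (rule sum.group[symmetric]) (auto simp: finite_doubletons)
  also have "\<dots> = (\<Sum>p\<in>{{s, t} | s t. s \<noteq> t}. 2 * on_pair F p)"
  proof (rule sum.cong[OF refl])
    fix p :: "'a set" assume "p \<in> {{s, t} | s t. s \<noteq> t}"
    then obtain s t where p: "p = {s, t}" "s \<noteq> t" by auto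
    then have "{q\<in>?D. (\<lambda>(s, t). {s, t}) q = p} = {(s, t), (t, s)}"
      by (auto simp: doubleton_eq_iff)
    then show "(\<Sum>q\<in>{q\<in>?D. (\<lambda>(s, t). {s, t}) q = p}. case_prod F q) = 2 * on_pair F p"
      using p by (simp add: on_pair_doubleton assms(1))
  qed
  finally show ?thesis by (simp add: sum_distrib_left[symmetric])
qed

lemma sum_edges:
  assumes "weighted_graph w" and "\<And>a b. G a b = G b a"
  shows "(\<Sum>e\<in>edges w. on_pair (\<lambda>s t. w s t * G s t) e) = (\<Sum>s\<in>UNIV. \<Sum>t\<in>UNIV. w s t * G s t) / 2"
proof -
  have w: "w s t = w t s" "w s t \<ge> 0" "w s s = 0" for s t
    using assms(1) by (auto simp: weighted_graph_def)
  have "(\<Sum>e\<in>edges w. on_pair (\<lambda>s t. w s t * G s t) e)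
      = (\<Sum>p\<in>{{s, t} | s t. s \<noteq> t}. on_pair (\<lambda>s t. w s t * G s t) p)"
  proof (rule sum.mono_neutral_left[OF finite_doubletons])
    show "edges w \<subseteq> {{s, t} | s t. s \<noteq> t}" unfolding edges_def by auto
    show "\<forall>p\<in>{{s, t} | s t. s \<noteq> t} - edges w. on_pair (\<lambda>s t. w s t * G s t) p = 0"
    proof
      fix p assume "p \<in> {{s, t} | s t. s \<noteq> t} - edges w"
      then obtain s t where p: "p = {s, t}" "s \<noteq> t" "\<not> w s t > 0"
        unfolding edges_def by blast
      with w(2)[of s t] show "on_pair (\<lambda>s t. w s t * G s t) p = 0"
        by (simp add: on_pair_doubleton w(1) assms(2))
    qed
  qed
  also have "\<dots> = (\<Sum>s\<in>UNIV. \<Sum>t\<in>UNIV. w s t * G s t) / 2"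
    by (rule sum_doubletons) (auto simp: w(1,3) assms(2))
  finally show ?thesis .
qed

lemma sum_swap3:
  "(\<Sum>s\<in>A. \<Sum>t\<in>B. \<Sum>i\<in>C. f s t i) = (\<Sum>i\<in>C. \<Sum>s\<in>A. \<Sum>t\<in>B. f s t i)"
proof -
  have "(\<Sum>s\<in>A. \<Sum>t\<in>B. \<Sum>i\<in>C. f s t i) = (\<Sum>s\<in>A. \<Sum>i\<in>C. \<Sum>t\<in>B. f s t i)"
    by (rule sum.cong[OF refl], rule sum.swap)
  also have "\<dots> = (\<Sum>i\<in>C. \<Sum>s\<in>A. \<Sum>t\<in>B. f s t i)"
    by (rule sum.swap)
  finally show ?thesis .
qed

lemma sum_sum_square_diff:
  fixes f :: "'a::finite \<Rightarrow> real"
  shows "(\<Sum>s\<in>UNIV. \<Sum>t\<in>UNIV. (f s - f t)\<^sup>2)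
    = 2 * real CARD('a) * (\<Sum>s\<in>UNIV. (f s)\<^sup>2) - 2 * (\<Sum>s\<in>UNIV. f s)\<^sup>2"
  by (simp add: power2_diff sum.distrib sum_subtractf sum_distrib_left sum_distrib_right
      power2_eq_square algebra_simps)

lemma laplacian_mult_vec: "(laplacian w *v f) $ s = (\<Sum>t\<in>UNIV. w s t * (f $ s - f $ t))"
proof -
  have "(laplacian w *v f) $ s
      = (\<Sum>t\<in>UNIV. (if s = t then (\<Sum>l\<in>UNIV. w s l) else 0) * f $ t) - (\<Sum>t\<in>UNIV. w s t * f $ t)"
    by (simp add: laplacian_def matrix_vector_mult_def left_diff_distrib sum_subtractf)
  also have "(\<Sum>t\<in>UNIV. (if s = t then (\<Sum>l\<in>UNIV. w s l) else 0) * f $ t) = (\<Sum>t\<in>UNIV. w s t * f $ s)"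
    by (simp add: sum_distrib_right[symmetric] if_distribR if_distrib sum.delta cong: if_cong)
  finally show ?thesis by (simp add: right_diff_distrib sum_subtractf)
qed

lemma laplacian_quadratic_form:
  assumes "\<And>s t. w s t = w t s"
  shows "f \<bullet> (laplacian w *v f) = (\<Sum>s\<in>UNIV. \<Sum>t\<in>UNIV. w s t * (f $ s - f $ t)\<^sup>2) / 2"
proof -
  have swap: "(\<Sum>s\<in>UNIV. \<Sum>t\<in>UNIV. w s t * (f $ t)\<^sup>2) = (\<Sum>s\<in>UNIV. \<Sum>t\<in>UNIV. w s t * (f $ s)\<^sup>2)"
    by (subst sum.swap) (simp add: assms)
  have "f \<bullet> (laplacian w *v f) = (\<Sum>s\<in>UNIV. \<Sum>t\<in>UNIV. w s t * ((f $ s)\<^sup>2 - f $ s * f $ t))"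
    by (simp add: laplacian_mult_vec inner_vec_def sum_distrib_left algebra_simps power2_eq_square)
  also have "\<dots> = (\<Sum>s\<in>UNIV. \<Sum>t\<in>UNIV. w s t * (f $ s - f $ t)\<^sup>2) / 2"
    using swap by (simp add: power2_diff sum.distrib sum_subtractf sum_distrib_left algebra_simps)
  finally show ?thesis .
qed

lemma sum_laplacian_mult_vec:
  assumes "\<And>s t. w s t = w t s"
  shows "(\<Sum>s\<in>UNIV. (laplacian w *v f) $ s) = 0"
proof -
  have "(\<Sum>s\<in>UNIV. \<Sum>t\<in>UNIV. w s t * f $ t) = (\<Sum>s\<in>UNIV. \<Sum>t\<in>UNIV. w s t * f $ s)"
    by (subst sum.swap) (simp add: assms)
  then show ?thesis
    by (simp add: laplacian_mult_vec right_diff_distrib sum_subtractf)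
qed

locale laplacian_eigenbasis =
  fixes w :: "'n::finite \<Rightarrow> 'n \<Rightarrow> real" and lam :: "'n \<Rightarrow> real" and x :: "'n \<Rightarrow> real^'n"
  assumes weighted_graph: "weighted_graph w"
    and orthonormal: "\<And>i j. x i \<bullet> x j = (if i = j then 1 else 0)"
    and spectral: "laplacian w = (\<Sum>i\<in>UNIV. lam i *\<^sub>R outer (x i) (x i))"
begin

lemma weight_commute: "w s t = w t s"
  using weighted_graph by (simp add: weighted_graph_def)

lemma laplacian_eigenvector: "laplacian w *v x j = lam j *\<^sub>R x j"
  unfolding spectral sum_matrix_vector_mult scaleR_matrix_vector_assoc[symmetric] outer_mult_vec
  by (simp add: inner_commute orthonormal if_distrib if_distribR sum.delta cong: if_cong)

lemma eigenvalue_eq_dirichlet_energy: "lam j = (\<Sum>s\<in>UNIV. \<Sum>t\<in>UNIV. w s t * (x j $ s - x j $ t)\<^sup>2) / 2"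
proof -
  have "lam j = x j \<bullet> (laplacian w *v x j)"
    by (simp add: laplacian_eigenvector orthonormal)
  then show ?thesis
    using laplacian_quadratic_form[of w "x j"] weight_commute by simp
qed

lemma sum_eigenvector_eq_0:
  assumes "lam j \<noteq> 0"
  shows "(\<Sum>s\<in>UNIV. x j $ s) = 0"
proof -
  have "lam j * (\<Sum>s\<in>UNIV. x j $ s) = (\<Sum>s\<in>UNIV. (laplacian w *v x j) $ s)"
    by (simp add: laplacian_eigenvector sum_distrib_left)
  also have "\<dots> = 0"
    by (simp add: sum_laplacian_mult_vec weight_commute)
  finally show ?thesis
    using assms by simp
qed

lemma sum_eigenvector_power2: "(\<Sum>s\<in>UNIV. (x j $ s)\<^sup>2) = 1"
  using orthonormal[of j j] by (simp add: inner_vec_def power2_eq_square)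

lemma sum_pairs_harm_dist_power2:
  "(\<Sum>p\<in>{{s, t} | s t. s \<noteq> t}. (on_pair (harm_dist lam x k) p)\<^sup>2)
    = real CARD('n) * (\<Sum>i\<in>{i. lam i > 0}. lam i powr (-k))"
proof -
  have "(\<Sum>p\<in>{{s, t} | s t. s \<noteq> t}. (on_pair (harm_dist lam x k) p)\<^sup>2)
      = (\<Sum>s\<in>UNIV. \<Sum>t\<in>UNIV. (harm_dist lam x k s t)\<^sup>2) / 2"
    unfolding on_pair_power2
    by (rule sum_doubletons) (metis harm_dist_commute, simp add: harm_dist_self)
  also have "\<dots> = (\<Sum>i\<in>{i. lam i > 0}. lam i powr (-k) * (\<Sum>s\<in>UNIV. \<Sum>t\<in>UNIV. (x i $ s - x i $ t)\<^sup>2)) / 2"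
    unfolding harm_dist_power2 sum_distrib_left by (subst sum_swap3) (rule refl)
  also have "\<dots> = real CARD('n) * (\<Sum>i\<in>{i. lam i > 0}. lam i powr (-k))"
    by (simp add: sum_sum_square_diff sum_eigenvector_eq_0 sum_eigenvector_power2
        sum_distrib_left sum_divide_distrib mult_ac)
  finally show ?thesis .
qed

lemma sum_edges_harm_dist_power2:
  "(\<Sum>e\<in>edges w. on_pair w e * (on_pair (harm_dist lam x k) e)\<^sup>2)
    = (\<Sum>i\<in>{i. lam i > 0}. lam i powr (1 - k))"
proof -
  have "(\<Sum>e\<in>edges w. on_pair w e * (on_pair (harm_dist lam x k) e)\<^sup>2)
      = (\<Sum>s\<in>UNIV. \<Sum>t\<in>UNIV. w s t * (harm_dist lam x k s t)\<^sup>2) / 2"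
    unfolding on_pair_power2 on_pair_mult[symmetric]
    by (rule sum_edges[OF weighted_graph]) (metis harm_dist_commute)
  also have "\<dots> = (\<Sum>i\<in>{i. lam i > 0}.
      lam i powr (-k) * ((\<Sum>s\<in>UNIV. \<Sum>t\<in>UNIV. w s t * (x i $ s - x i $ t)\<^sup>2) / 2))"
    unfolding harm_dist_power2 sum_distrib_left sum_divide_distrib
    by (subst sum_swap3) (simp add: mult_ac)
  also have "\<dots> = (\<Sum>i\<in>{i. lam i > 0}. lam i powr (1 - k))"
  proof (rule sum.cong[OF refl])
    fix i assume "i \<in> {i. lam i > 0}"
    then have "lam i powr (1 - k) = lam i powr (-k) * lam i"
      by (simp add: powr_diff powr_minus divide_inverse)
    then show "lam i powr (-k) * ((\<Sum>s\<in>UNIV. \<Sum>t\<in>UNIV. w s t * (x i $ s - x i $ t)\<^sup>2) / 2)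
        = lam i powr (1 - k)"
      by (simp only: eigenvalue_eq_dirichlet_energy[symmetric])
  qed
  finally show ?thesis .
qed

end

theorem theorem6p3:
  fixes w :: "'n::finite \<Rightarrow> 'n \<Rightarrow> real"
    and lam :: "'n \<Rightarrow> real" and x :: "'n \<Rightarrow> real^'n" and k :: real
  assumes "weighted_graph w"
    and "connected_graph w"
    and "\<And>i j. x i \<bullet> x j = (if i = j then 1 else 0)"
    and "laplacian w = (\<Sum>i\<in>UNIV. lam i *\<^sub>R outer (x i) (x i))"
  shows "(\<Sum>p\<in>{{s, t} | s t. s \<noteq> t}. (on_pair (harm_dist lam x (2 * k - 1)) p)\<^sup>2)
       = real CARD('n) * (\<Sum>e\<in>edges w. on_pair w e * (on_pair (harm_dist lam x (2 * k)) e)\<^sup>2)"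
proof -
  interpret laplacian_eigenbasis w lam x
    using assms(1,3,4) by unfold_locales
  show ?thesis
    unfolding sum_pairs_harm_dist_power2 sum_edges_harm_dist_power2 by simp
qed

end
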